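(* Let $P$ be a nilpotent linear operator on a finite-dimensional real or complex symplectic vector space $(V, B)$ which is self-adjoint with respect to $B$. Then every subspace $W \subset V$ invariant under the group $\mathrm{Aut}(V, B, P)$ has the form $W = \bigoplus_{i=1}^s (\operatorname{Ker} P^{k_i} \cap \operatorname{Im} P^{l_i})$ for some $s \in \mathbb{N}$ and integers $k_i, l_i \geq 0$.
   Context: $P$ self-adjoint with respect to $B$ means $B(Pu, v) = B(u, Pv)$ for all $u, v$. $\mathrm{Aut}(V, B, P)$ is the group of linear automorphisms of $V$ preserving $B$ and commuting with $P$ (equivalently, preserving both $B$ and $A(u,v) = B(Pu,v)$). *)

theory Defs
  imports "HOL-Analysis.Analysis"
begin

definition fin_dim_vs :: "('k::field \<Rightarrow> 'v::ab_group_add \<Rightarrow> 'v) \<Rightarrow> bool" where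
  "fin_dim_vs smult_v \<longleftrightarrow> vector_space smult_v \<and>
     (\<exists>S. finite S \<and> module.span smult_v S = UNIV)"

definition symplectic_form ::
  "('k::field \<Rightarrow> 'v::ab_group_add \<Rightarrow> 'v) \<Rightarrow> ('v \<Rightarrow> 'v \<Rightarrow> 'k) \<Rightarrow> bool" where
  "symplectic_form smult_v B \<longleftrightarrow>
     (\<forall>u v w. B (u + v) w = B u w + B v w) \<and>
     (\<forall>u v w. B u (v + w) = B u v + B u w) \<and>
     (\<forall>c u v. B (smult_v c u) v = c * B u v) \<and>
     (\<forall>c u v. B u (smult_v c v) = c * B u v) \<and>
     (\<forall>u. B u u = 0) \<and>
     (\<forall>u. (\<forall>v. B u v = 0) \<longrightarrow> u = 0)"

definition nilpotent_op :: "('v::zero \<Rightarrow> 'v) \<Rightarrow> bool" where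
  "nilpotent_op P \<longleftrightarrow> (\<exists>n. (P ^^ n) = (\<lambda>_. 0))"

definition self_adjoint_wrt :: "('v \<Rightarrow> 'v \<Rightarrow> 'k) \<Rightarrow> ('v \<Rightarrow> 'v) \<Rightarrow> bool" where
  "self_adjoint_wrt B P \<longleftrightarrow> (\<forall>u v. B (P u) v = B u (P v))"

definition Aut_VBP ::
  "('k::field \<Rightarrow> 'v::ab_group_add \<Rightarrow> 'v) \<Rightarrow> ('v \<Rightarrow> 'v \<Rightarrow> 'k) \<Rightarrow> ('v \<Rightarrow> 'v) \<Rightarrow> ('v \<Rightarrow> 'v) set" where
  "Aut_VBP smult_v B P = {g. Vector_Spaces.linear smult_v smult_v g \<and> bij g \<and>
      (\<forall>u v. B (g u) (g v) = B u v) \<and> g \<circ> P = P \<circ> g}"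

definition ker_pow :: "('v::zero \<Rightarrow> 'v) \<Rightarrow> nat \<Rightarrow> 'v set" where
  "ker_pow P k = {v. (P ^^ k) v = 0}"

definition im_pow :: "('v \<Rightarrow> 'v) \<Rightarrow> nat \<Rightarrow> 'v set" where
  "im_pow P l = range (P ^^ l)"

definition subspace_sum :: "nat \<Rightarrow> (nat \<Rightarrow> 'v::comm_monoid_add set) \<Rightarrow> 'v set" where
  "subspace_sum s U = {\<Sum>i<s. x i | x. \<forall>i<s. x i \<in> U i}"

definition theorem7_claim ::
  "('k::field \<Rightarrow> 'v::ab_group_add \<Rightarrow> 'v) \<Rightarrow> ('v \<Rightarrow> 'v \<Rightarrow> 'k) \<Rightarrow> ('v \<Rightarrow> 'v) \<Rightarrow> bool" where
  "theorem7_claim smult_v B P \<longleftrightarrow>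
     (\<forall>W. module.subspace smult_v W \<and> (\<forall>g \<in> Aut_VBP smult_v B P. g ` W \<subseteq> W) \<longrightarrow>
        (\<exists>s k l. W = subspace_sum s (\<lambda>i. ker_pow P (k i) \<inter> im_pow P (l i))))"

end

theory Submission
  imports Defs
begin

(* For c, d in V let shear M c d be the operator x |-> sum_{i<=M} B(P^i c, x) P^(M-i) d.
   If P^(M+1) c = 0, then X = shear M c c is B-skew, B-isotropic, squares to zero and
   commutes with P, so 1 + X lies in Aut(V, B, P).  An invariant subspace W is therefore
   stable under shear M c c and, by polarization, under shear M c d + shear M d c.

   Let w in W with P^(n+1) w = 0 but P^n w <> 0, let M be maximal with P^n w in Im P^M,
   and use nondegeneracy to pick a in Ker P^(M+1) with B(a, P^n w) = 1.  Applied to w,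
   these operators produce P^(M-n) d plus terms P^(M-n) d' with d' of lower nilpotency
   order, so induction on that order puts Ker P^(n+1) /\ Im P^(M-n) = P^(M-n) (Ker P^(M+1))
   inside W.  This piece contains a p with P^n p = P^n w, and induction on n, applied to
   w - p, exhibits W as the sum of the pieces Ker P^k /\ Im P^l that it contains. *)

context module
begin

lemma subspace_subspace_sum:
  assumes "\<And>i. i < n \<Longrightarrow> subspace (U i)"
  shows "subspace (subspace_sum n U)"
  unfolding subspace_def
proof (intro conjI ballI allI)
  show "0 \<in> subspace_sum n U"
    unfolding subspace_sum_def using assms subspace_0 by (intro CollectI exI[of _ "\<lambda>_. 0"]) auto
next
  fix x y assume "x \<in> subspace_sum n U" "y \<in> subspace_sum n U"
  then obtain f g where "x = (\<Sum>i<n. f i)" "\<forall>i<n. f i \<in> U i" "y = (\<Sum>i<n. g i)" "\<forall>i<n. g i \<in> U i"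
    unfolding subspace_sum_def by blast
  then show "x + y \<in> subspace_sum n U"
    unfolding subspace_sum_def using assms subspace_add
    by (intro CollectI exI[of _ "\<lambda>i. f i + g i"]) (auto simp: sum.distrib)
next
  fix c x assume "x \<in> subspace_sum n U"
  then obtain f where "x = (\<Sum>i<n. f i)" "\<forall>i<n. f i \<in> U i"
    unfolding subspace_sum_def by blast
  then show "scale c x \<in> subspace_sum n U"
    unfolding subspace_sum_def using assms subspace_scale
    by (intro CollectI exI[of _ "\<lambda>i. scale c (f i)"]) (auto simp: scale_sum_right)
qed

lemma subset_subspace_sum:
  assumes "\<And>i. i < n \<Longrightarrow> 0 \<in> U i" and "j < n"
  shows "U j \<subseteq> subspace_sum n U"
proof
  fix x assume "x \<in> U j"
  then show "x \<in> subspace_sum n U"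
    unfolding subspace_sum_def using assms
    by (intro CollectI exI[of _ "\<lambda>i. if i = j then x else 0"]) auto
qed

lemma subspace_sum_subset:
  assumes "subspace W" and "\<And>i. i < n \<Longrightarrow> U i \<subseteq> W"
  shows "subspace_sum n U \<subseteq> W"
  unfolding subspace_sum_def using assms by (auto intro!: subspace_sum)

end

locale symplectic_space =
  fixes s :: "'k::field \<Rightarrow> 'v::ab_group_add \<Rightarrow> 'v" and B :: "'v \<Rightarrow> 'v \<Rightarrow> 'k"
  assumes fin_dim: "fin_dim_vs s" and symplectic: "symplectic_form s B"

sublocale symplectic_space \<subseteq> vector_space s
  using fin_dim by (simp add: fin_dim_vs_def)

context symplectic_space
begin

lemma B_add_left: "B (u + v) w = B u w + B v w"
  and B_add_right: "B u (v + w) = B u v + B u w"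
  and B_scale_left: "B (s c u) v = c * B u v"
  and B_scale_right: "B u (s c v) = c * B u v"
  and B_alternating: "B u u = 0"
  using symplectic by (simp_all add: symplectic_form_def)

lemma B_nondegenerate: "(\<And>v. B u v = 0) \<Longrightarrow> u = 0"
  using symplectic unfolding symplectic_form_def by blast

lemma B_zero_left [simp]: "B 0 v = 0"
  using B_scale_left[of 0 0 v] by simp

lemma B_zero_right [simp]: "B u 0 = 0"
  using B_scale_right[of u 0 0] by simp

lemma B_diff_left: "B (u - u') v = B u v - B u' v"
  using B_add_left[of "u - u'" u' v] by (simp add: algebra_simps)

lemma B_sum_left: "B (sum f A) v = (\<Sum>i\<in>A. B (f i) v)"
  by (induct A rule: infinite_finite_induct) (auto simp: B_add_left)

lemma B_sum_right: "B v (sum f A) = (\<Sum>i\<in>A. B v (f i))"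
  by (induct A rule: infinite_finite_induct) (auto simp: B_add_right)

lemma B_skew: "B u v = - B v u"
proof -
  have "B (u + v) (u + v) = (B u u + B u v) + (B v u + B v v)"
    by (simp add: B_add_left B_add_right ac_simps)
  then have "B u v + B v u = 0"
    by (simp add: B_alternating)
  then show ?thesis
    by (simp add: eq_neg_iff_add_eq_0)
qed

lemma annihilator_span:
  assumes "\<And>x. x \<in> S \<Longrightarrow> B a x = 0" and "y \<in> span S"
  shows "B a y = 0"
proof -
  have "subspace {x. B a x = 0}"
    unfolding subspace_def by (simp add: B_add_right B_scale_right)
  then show ?thesis
    using assms span_minimal[of S "{x. B a x = 0}"] by blast
qed

text \<open>Nondegeneracy makes \<open>a \<mapsto> B a\<close> injective, hence onto the dual space by counting
  dimensions; a functional is encoded by its values on a basis \<open>Bas\<close>, i.e. as the vector \<open>T a\<close>.\<close>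
lemma exists_prescribed_pairings:
  assumes "independent E"
  shows "\<exists>a. \<forall>e\<in>E. B a e = g e"
proof -
  obtain S0 where S0: "finite S0" "span S0 = UNIV"
    using fin_dim unfolding fin_dim_vs_def by blast
  obtain B0 where B0: "B0 \<subseteq> S0" "independent B0" "S0 \<subseteq> span B0"
    using maximal_independent_subset by blast
  have "span B0 = UNIV"
    using S0(2) span_mono[OF B0(3)] by (auto simp: span_span)
  interpret fd: finite_dimensional_vector_space s B0
    by unfold_locales (use B0 S0 \<open>span B0 = UNIV\<close> finite_subset in auto)
  define Bas where "Bas = extend_basis E"
  have Bas: "E \<subseteq> Bas" "independent Bas" "span Bas = UNIV" "finite Bas"
    unfolding Bas_def using assms
    by (auto simp: extend_basis_superset independent_extend_basis span_extend_basis
        intro: fd.finiteI_independent)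
  define T where "T a = (\<Sum>e\<in>Bas. s (B a e) e)" for a
  have coord: "\<forall>e\<in>Bas. f e = f' e" if "(\<Sum>e\<in>Bas. s (f e) e) = (\<Sum>e\<in>Bas. s (f' e) e)" for f f'
  proof -
    have "(\<Sum>e\<in>Bas. s (f e - f' e) e) = 0"
      using that by (simp add: scale_left_diff_distrib sum_subtractf)
    then show ?thesis
      using independentD[OF Bas(2) Bas(4) order_refl] by fastforce
  qed
  have "Vector_Spaces.linear s s T"
    unfolding Vector_Spaces.linear_iff T_def using vector_space_axioms
    by (simp add: B_add_left B_scale_left scale_left_distrib sum.distrib scale_sum_right)
  moreover have "inj T"
  proof (rule injI)
    fix a a' assume "T a = T a'"
    then have "\<forall>e\<in>Bas. B (a - a') e = 0"
      unfolding T_def by (auto dest: coord simp: B_diff_left)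
    then have "B (a - a') y = 0" for y
      using annihilator_span Bas(3) by blast
    then show "a = a'"
      using B_nondegenerate by fastforce
  qed
  ultimately have "surj T"
    by (rule fd.linear_inj_imp_surj)
  then obtain a where "T a = (\<Sum>e\<in>Bas. s (if e \<in> E then g e else 0) e)"
    by (metis surjD)
  then have "\<forall>e\<in>Bas. B a e = (if e \<in> E then g e else 0)"
    unfolding T_def by (rule coord)
  then have "\<forall>e\<in>E. B a e = g e"
    using Bas(1) by auto
  then show ?thesis ..
qed

lemma exists_annihilator:
  assumes "subspace U" and "z \<notin> U"
  shows "\<exists>a. (\<forall>u\<in>U. B a u = 0) \<and> B a z = 1"
proof -
  obtain E where E: "E \<subseteq> U" "independent E" "U \<subseteq> span E"
    using maximal_independent_subset by blast
  have "z \<notin> span E"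
    using span_minimal[OF E(1) assms(1)] assms(2) by blast
  then have "independent (insert z E)" and "z \<notin> E"
    using independent_insertI[OF _ E(2)] span_base by blast+
  then obtain a where "\<forall>e\<in>insert z E. B a e = (if e = z then 1 else 0)"
    using exists_prescribed_pairings by presburger
  then show ?thesis
    using annihilator_span[of E a] E(3) \<open>z \<notin> E\<close> by fastforce
qed

end

section \<open>Self-adjoint nilpotent operators\<close>

locale nilpotent_self_adjoint = symplectic_space s B
  for s :: "'k::field_char_0 \<Rightarrow> 'v::ab_group_add \<Rightarrow> 'v" and B +
  fixes P :: "'v \<Rightarrow> 'v" and N :: nat
  assumes linear_P: "Vector_Spaces.linear s s P"
    and self_adjoint: "self_adjoint_wrt B P"
    and nilpotent: "P ^^ N = (\<lambda>_. 0)"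
begin

lemma linear_funpow_P: "Vector_Spaces.linear s s (P ^^ n)"
proof (induct n)
  case (Suc n)
  then show ?case
    using Vector_Spaces.linear_compose[OF Suc linear_P] by (simp add: comp_def)
qed (simp add: linear_ident)

lemmas P_add = module_hom.add[OF linear_P[unfolded linear_iff_module_hom]]
  and P_scale = module_hom.scale[OF linear_P[unfolded linear_iff_module_hom]]
  and P_sum = module_hom.sum[OF linear_P[unfolded linear_iff_module_hom]]
  and funpow_P_add = module_hom.add[OF linear_funpow_P[unfolded linear_iff_module_hom]]
  and funpow_P_zero [simp] = module_hom.zero[OF linear_funpow_P[unfolded linear_iff_module_hom]]
  and funpow_P_diff = module_hom.diff[OF linear_funpow_P[unfolded linear_iff_module_hom]]

lemma funpow_P_funpow: "(P ^^ m) ((P ^^ n) x) = (P ^^ (m + n)) x"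
  by (simp add: funpow_add)

lemma funpow_P_eq_0_mono: "(P ^^ m) x = 0 \<Longrightarrow> m \<le> m' \<Longrightarrow> (P ^^ m') x = 0"
  using funpow_P_funpow[of "m' - m" m x] by simp

lemma funpow_P_kernel_closed: "(P ^^ m) x = 0 \<Longrightarrow> (P ^^ m) ((P ^^ k) x) = 0"
  using funpow_P_funpow[of m k x] funpow_P_funpow[of k m x] by (simp add: add.commute)

lemma funpow_P_eq_0: "N \<le> m \<Longrightarrow> (P ^^ m) x = 0"
  using funpow_P_eq_0_mono[of N x m] nilpotent by simp

lemma subspace_ker_pow: "subspace (ker_pow P k)"
  unfolding ker_pow_def by (rule module_hom.subspace_kernel[OF linear_funpow_P[unfolded linear_iff_module_hom]])

lemma subspace_im_pow: "subspace (im_pow P l)"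
  unfolding im_pow_def by (rule module_hom.subspace_image[OF linear_funpow_P[unfolded linear_iff_module_hom] subspace_UNIV])

lemma B_funpow_P: "B ((P ^^ n) u) v = B u ((P ^^ n) v)"
proof (induct n arbitrary: v)
  case (Suc n)
  have "B (P ((P ^^ n) u)) v = B ((P ^^ n) u) (P v)"
    using self_adjoint unfolding self_adjoint_wrt_def by blast
  with Suc show ?case
    by (simp add: funpow_swap1)
qed simp

text \<open>Self-adjointness makes \<open>(c, d) \<mapsto> B c (P\<^sup>m d)\<close> symmetric, while \<open>B\<close> is skew;
  in characteristic \<open>0\<close> the two force it to vanish on the diagonal.\<close>
lemma B_funpow_P_same: "B ((P ^^ i) c) ((P ^^ j) c) = 0"
proof -
  let ?x = "B c ((P ^^ (i + j)) c)"
  have "?x = B ((P ^^ (i + j)) c) c"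
    by (simp add: B_funpow_P)
  then have "?x = - ?x"
    using B_skew by metis
  then have "?x = 0"
    by simp
  then show ?thesis
    by (simp add: B_funpow_P funpow_P_funpow add.commute)
qed

lemma funpow_P_eq_0_if_orthogonal_range: "(\<And>x. B a ((P ^^ m) x) = 0) \<Longrightarrow> (P ^^ m) a = 0"
  by (rule B_nondegenerate) (simp add: B_funpow_P)

lemma subspace_half:
  assumes "subspace W" and "y + y \<in> W"
  shows "y \<in> W"
proof -
  have "s (1 / 2) (y + y) = s (1 / 2 + 1 / 2) y"
    by (simp only: scale_right_distrib scale_left_distrib)
  then show ?thesis
    using subspace_scale[OF assms, of "1 / 2"] by simp
qed

section \<open>Unipotent automorphisms\<close>

definition shear :: "nat \<Rightarrow> 'v \<Rightarrow> 'v \<Rightarrow> 'v \<Rightarrow> 'v" where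
  "shear M c d x = (\<Sum>i\<le>M. s (B ((P ^^ i) c) x) ((P ^^ (M - i)) d))"

lemma shear_add: "shear M c d (x + y) = shear M c d x + shear M c d y"
  unfolding shear_def by (simp add: B_add_right scale_left_distrib sum.distrib)

lemma shear_scale: "shear M c d (s r x) = s r (shear M c d x)"
  unfolding shear_def by (simp add: B_scale_right scale_sum_right)

lemma shear_diff: "shear M c d (x - y) = shear M c d x - shear M c d y"
  using shear_add[of M c d "x - y" y] by (simp add: eq_diff_eq)

lemma shear_polarize:
  "shear M (a + b) (a + b) x = shear M a a x + shear M b b x + (shear M a b x + shear M b a x)"
  unfolding shear_def
  by (simp add: funpow_P_add B_add_left scale_left_distrib scale_right_distrib sum.distrib algebra_simps)

lemma shear_P: "shear M c d (P x) = shear M (P c) d x"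
  unfolding shear_def using B_funpow_P[of 1] by (simp add: B_funpow_P funpow_swap1)

lemma P_shear: "P (shear M c d x) = shear M c (P d) x"
  unfolding shear_def by (simp add: P_sum P_scale funpow_swap1)

text \<open>Moving one factor \<open>P\<close> from \<open>c\<close> to \<open>d\<close> shifts the summation index; the two boundary
  terms vanish because \<open>P\<^bsup>M+1\<^esup>\<close> kills \<open>c\<close> and \<open>d\<close>.\<close>
lemma shear_shift:
  assumes "(P ^^ Suc M) c = 0" and "(P ^^ Suc M) d = 0"
  shows "shear M (P c) d x = shear M c (P d) x"
proof -
  define F where "F i = s (B ((P ^^ i) c) x) ((P ^^ (Suc M - i)) d)" for i
  have "shear M (P c) d x = (\<Sum>i\<le>M. F (Suc i))"
    unfolding shear_def F_def by (simp add: funpow_swap1)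
  also have "\<dots> = sum F {..Suc M}"
    using assms(2) by (simp add: sum.atMost_Suc_shift F_def del: sum.atMost_Suc)
  also have "\<dots> = sum F {..M}"
    using assms(1) by (simp add: F_def)
  also have "\<dots> = shear M c (P d) x"
    unfolding shear_def F_def by (intro sum.cong) (simp_all add: Suc_diff_le funpow_swap1)
  finally show ?thesis .
qed

lemma shear_shift_funpow:
  assumes "(P ^^ Suc M) c = 0" and "(P ^^ Suc M) d = 0"
  shows "shear M ((P ^^ k) c) d x = shear M c ((P ^^ k) d) x"
  using assms(2)
proof (induct k arbitrary: d)
  case (Suc k)
  have "(P ^^ Suc M) (P d) = 0"
    using funpow_P_kernel_closed[OF Suc.prems, of 1] by simp
  have "shear M ((P ^^ Suc k) c) d x = shear M ((P ^^ k) c) (P d) x"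
    using shear_shift[OF funpow_P_kernel_closed[OF assms(1)] Suc.prems] by simp
  also have "\<dots> = shear M c ((P ^^ k) (P d)) x"
    using Suc.hyps[OF \<open>(P ^^ Suc M) (P d) = 0\<close>] .
  finally show ?case
    by (simp add: funpow_swap1)
qed simp

lemma B_shear_left: "B (shear M c d u) v = (\<Sum>i\<le>M. B ((P ^^ i) c) u * B ((P ^^ (M - i)) d) v)"
  unfolding shear_def by (simp add: B_sum_left B_scale_left)

lemma B_shear_right: "B v (shear M c d u) = (\<Sum>i\<le>M. B ((P ^^ i) c) u * B v ((P ^^ (M - i)) d))"
  unfolding shear_def by (simp add: B_sum_right B_scale_right)

lemma shear_skew: "B (shear M c c u) v = - B u (shear M c c v)"
proof -
  have "B u (shear M c c v) = (\<Sum>i\<le>M. B ((P ^^ (M - i)) c) v * B u ((P ^^ (M - (M - i))) c))"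
    unfolding B_shear_right
    by (rule sum.reindex_bij_witness[where i="\<lambda>i. M - i" and j="\<lambda>i. M - i"]) auto
  also have "\<dots> = - B (shear M c c u) v"
    unfolding B_shear_left sum_negf[symmetric]
    by (intro sum.cong) (auto simp: B_skew[of u])
  finally show ?thesis
    by simp
qed

lemma shear_isotropic: "B (shear M c c u) (shear M c c v) = 0"
  unfolding B_shear_left B_shear_right by (simp add: B_funpow_P_same)

lemma shear_shear: "shear M c c (shear M c c x) = 0"
  unfolding shear_def[of M c c "shear M c c x"] by (simp add: B_shear_right B_funpow_P_same)

lemma shear_in_Aut:
  assumes "(P ^^ Suc M) c = 0"
  shows "(\<lambda>x. x + shear M c c x) \<in> Aut_VBP s B P"
proof -
  let ?g = "\<lambda>x. x + shear M c c x"
  have "Vector_Spaces.linear s s ?g"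
    unfolding Vector_Spaces.linear_iff using vector_space_axioms
    by (simp add: shear_add shear_scale scale_right_distrib)
  moreover have "bij ?g"
    by (rule bij_betw_byWitness[where f'="\<lambda>x. x - shear M c c x"])
      (auto simp: shear_add shear_diff shear_shear)
  moreover have "B (?g u) (?g v) = B u v" for u v
    using shear_skew[of M c u v] shear_isotropic[of M c u v]
    by (simp add: B_add_left B_add_right)
  moreover have "?g \<circ> P = P \<circ> ?g"
    using shear_shift[OF assms assms] by (simp add: fun_eq_iff shear_P P_shear P_add)
  ultimately show ?thesis
    unfolding Aut_VBP_def by blast
qed

section \<open>Invariant subspaces\<close>

lemma shear_expand:
  assumes "(P ^^ Suc n) w = 0" and "n \<le> M"
  shows "shear M a d w = s (B a ((P ^^ n) w)) ((P ^^ (M - n)) d)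
    + (\<Sum>i<n. s (B a ((P ^^ i) w)) ((P ^^ (M - n)) ((P ^^ (n - i)) d)))"
proof -
  let ?F = "\<lambda>i. s (B a ((P ^^ i) w)) ((P ^^ (M - i)) d)"
  have "shear M a d w = (\<Sum>i\<le>M. ?F i)"
    unfolding shear_def by (simp add: B_funpow_P)
  also have "\<dots> = (\<Sum>i\<le>n. ?F i)"
    using assms funpow_P_eq_0_mono[OF assms(1)] by (intro sum.mono_neutral_right) auto
  also have "\<dots> = ?F n + (\<Sum>i<n. ?F i)"
    by (simp add: lessThan_Suc_atMost[symmetric])
  also have "(\<Sum>i<n. ?F i) = (\<Sum>i<n. s (B a ((P ^^ i) w)) ((P ^^ (M - n)) ((P ^^ (n - i)) d)))"
  proof (intro sum.cong refl)
    fix i assume "i \<in> {..<n}"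
    then have "M - i = M - n + (n - i)"
      using assms(2) by auto
    then show "?F i = s (B a ((P ^^ i) w)) ((P ^^ (M - n)) ((P ^^ (n - i)) d))"
      by (simp add: funpow_P_funpow)
  qed
  finally show ?thesis .
qed

text \<open>By \<open>shear_expand\<close>, \<open>shear M a d w\<close> is \<open>P\<^bsup>M-n\<^esup> d\<close> plus terms \<open>P\<^bsup>M-n\<^esup> d'\<close>
  with \<open>d'\<close> of smaller nilpotency order, so induction on that order applies.\<close>
lemma funpow_mem_of_shear_mem:
  assumes W: "subspace W"
    and w: "(P ^^ Suc n) w = 0" "B a ((P ^^ n) w) = 1" "n \<le> M"
    and D_closed: "\<And>d k. d \<in> D \<Longrightarrow> (P ^^ k) d \<in> D"
    and D_shear: "\<And>d. d \<in> D \<Longrightarrow> shear M a d w \<in> W"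
    and "d \<in> D"
  shows "(P ^^ (M - n)) d \<in> W"
proof -
  have "(P ^^ (M - n)) d \<in> W" if "d \<in> D" "(P ^^ m) d = 0" for m d
    using that
  proof (induct m arbitrary: d)
    case 0
    then show ?case
      using subspace_0[OF W] by simp
  next
    case (Suc m)
    have "(P ^^ (M - n)) ((P ^^ (n - i)) d) \<in> W" if "i < n" for i
    proof (rule Suc.hyps)
      show "(P ^^ (n - i)) d \<in> D"
        using D_closed Suc.prems(1) .
      show "(P ^^ m) ((P ^^ (n - i)) d) = 0"
        using funpow_P_eq_0_mono[OF Suc.prems(2), of "m + (n - i)"] that by (simp add: funpow_P_funpow)
    qed
    then have "(\<Sum>i<n. s (B a ((P ^^ i) w)) ((P ^^ (M - n)) ((P ^^ (n - i)) d))) \<in> W"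
      by (intro subspace_sum[OF W] subspace_scale[OF W]) auto
    moreover have "shear M a d w \<in> W"
      using D_shear Suc.prems(1) .
    ultimately show ?case
      using subspace_diff[OF W] shear_expand[OF w(1) w(3), of a d] w(2) by force
  qed
  then show ?thesis
    using \<open>d \<in> D\<close> funpow_P_eq_0[of N d] by blast
qed

lemma exists_height:
  assumes "z \<noteq> 0" and "z \<in> range (P ^^ n)"
  obtains M where "n \<le> M" "M < N" "z \<in> range (P ^^ M)" "z \<notin> range (P ^^ Suc M)"
proof -
  have outside: "z \<notin> range (P ^^ m)" if "N \<le> m" for m
    using assms(1) funpow_P_eq_0[OF that] by auto
  then have "n \<le> N"
    using assms(2) by (meson nat_le_linear)
  have "\<exists>M. n \<le> M \<and> M < N \<and> z \<in> range (P ^^ M) \<and> z \<notin> range (P ^^ Suc M)"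
  proof (rule ccontr)
    assume none: "\<not> ?thesis"
    have "z \<in> range (P ^^ h)" if "n \<le> h" for h
      using that
    proof (induct rule: dec_induct)
      case base
      show ?case
        using assms(2) .
    next
      case (step h)
      then show ?case
        using none outside[of h] not_le by blast
    qed
    then show False
      using outside[of N] \<open>n \<le> N\<close> by blast
  qed
  then show ?thesis
    using that by blast
qed

context
  fixes W
  assumes W: "subspace W" and invariant: "\<forall>g\<in>Aut_VBP s B P. g ` W \<subseteq> W"
begin

lemma shear_mem:
  assumes "x \<in> W" and "(P ^^ Suc M) c = 0"
  shows "shear M c c x \<in> W"
proof -
  have "(\<lambda>x. x + shear M c c x) ` W \<subseteq> W"
    by (rule bspec[OF invariant shear_in_Aut[OF assms(2)]])
  then have "x + shear M c c x \<in> W"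
    using assms(1) by blast
  then have "(x + shear M c c x) - x \<in> W"
    by (rule subspace_diff[OF W _ assms(1)])
  then show ?thesis
    by simp
qed

lemma shear_sym_mem:
  assumes "x \<in> W" and "(P ^^ Suc M) a = 0" and "(P ^^ Suc M) b = 0"
  shows "shear M a b x + shear M b a x \<in> W"
proof -
  have "(P ^^ Suc M) (a + b) = 0"
    unfolding funpow_P_add using assms by simp
  then have "shear M (a + b) (a + b) x - shear M a a x - shear M b b x \<in> W"
    by (intro subspace_diff[OF W] shear_mem assms)
  then show ?thesis
    by (simp add: shear_polarize)
qed

lemma shear_funpow_mem:
  assumes "x \<in> W" and "(P ^^ Suc M) a = 0"
  shows "shear M a ((P ^^ k) a) x \<in> W"
proof (rule subspace_half[OF W])
  show "shear M a ((P ^^ k) a) x + shear M a ((P ^^ k) a) x \<in> W"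
    using shear_sym_mem[OF assms funpow_P_kernel_closed[OF assms(2)]]
      shear_shift_funpow[OF assms(2) assms(2)] by simp
qed

text \<open>First the tail \<open>P\<^sup>j a\<close>, \<open>j \<ge> M - n\<close>, is shown to lie in \<open>W\<close>; through it so do
  \<open>shear M b a w\<close> and hence \<open>shear M a b w\<close> for every \<open>b \<in> Ker P\<^bsup>M+1\<^esup>\<close>.\<close>
lemma funpow_kernel_mem:
  assumes w: "w \<in> W" "(P ^^ Suc n) w = 0"
    and a: "(P ^^ Suc M) a = 0" "B a ((P ^^ n) w) = 1"
    and "n \<le> M" and "(P ^^ Suc M) b = 0"
  shows "(P ^^ (M - n)) b \<in> W"
proof -
  have a_tail: "(P ^^ j) a \<in> W" if "M - n \<le> j" for j
  proof -
    have "(P ^^ (M - n)) ((P ^^ (j - (M - n))) a) \<in> W"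
      by (rule funpow_mem_of_shear_mem[OF W w(2) a(2) \<open>n \<le> M\<close>, where D="range (\<lambda>k. (P ^^ k) a)"])
        (auto simp: funpow_P_funpow shear_funpow_mem[OF w(1) a(1)] image_iff)
    then show ?thesis
      using that by (simp add: funpow_P_funpow)
  qed
  have shear_ba: "shear M b a w \<in> W" for b
    unfolding shear_def
  proof (rule subspace_sum[OF W])
    fix i
    show "s (B ((P ^^ i) b) w) ((P ^^ (M - i)) a) \<in> W"
    proof (cases "i \<le> n")
      case True
      then show ?thesis
        using a_tail[of "M - i"] subspace_scale[OF W] by simp
    next
      case False
      then have "(P ^^ i) w = 0"
        using funpow_P_eq_0_mono[OF w(2)] by simp
      then show ?thesis
        using subspace_0[OF W] by (simp add: B_funpow_P)
    qed
  qed
  have shear_ab: "shear M a b w \<in> W" if "(P ^^ Suc M) b = 0" for b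
  proof -
    have "(shear M a b w + shear M b a w) - shear M b a w \<in> W"
      by (rule subspace_diff[OF W shear_sym_mem[OF w(1) a(1) that] shear_ba])
    then show ?thesis
      by simp
  qed
  show ?thesis
    by (rule funpow_mem_of_shear_mem[OF W w(2) a(2) \<open>n \<le> M\<close>, where D="{b. (P ^^ Suc M) b = 0}"])
      (simp_all only: mem_Collect_eq shear_ab funpow_P_kernel_closed assms(6))
qed

text \<open>Take \<open>M\<close> maximal with \<open>P\<^sup>n w \<in> Im P\<^sup>M\<close>; an \<open>a\<close> annihilating \<open>Im P\<^bsup>M+1\<^esup>\<close> but pairing to
  \<open>1\<close> with \<open>P\<^sup>n w\<close> lies in \<open>Ker P\<^bsup>M+1\<^esup>\<close>, so \<open>funpow_kernel_mem\<close> applies.\<close>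
lemma exists_piece_through:
  assumes "w \<in> W" "(P ^^ Suc n) w = 0" "(P ^^ n) w \<noteq> 0"
  obtains l p where "l \<le> N" "ker_pow P (Suc n) \<inter> im_pow P l \<subseteq> W"
    "p \<in> ker_pow P (Suc n) \<inter> im_pow P l" "(P ^^ n) p = (P ^^ n) w"
proof -
  obtain M where M: "n \<le> M" "M < N" "(P ^^ n) w \<in> range (P ^^ M)" "(P ^^ n) w \<notin> range (P ^^ Suc M)"
    using exists_height[OF assms(3)] by blast
  obtain a where a: "\<forall>u\<in>range (P ^^ Suc M). B a u = 0" "B a ((P ^^ n) w) = 1"
    using exists_annihilator[OF subspace_im_pow[unfolded im_pow_def] M(4)] by blast
  have "(P ^^ Suc M) a = 0"
    using a(1) by (intro funpow_P_eq_0_if_orthogonal_range) auto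
  have piece: "ker_pow P (Suc n) \<inter> im_pow P (M - n) \<subseteq> W"
  proof
    fix x assume "x \<in> ker_pow P (Suc n) \<inter> im_pow P (M - n)"
    then obtain y where y: "x = (P ^^ (M - n)) y" "(P ^^ Suc n) x = 0"
      unfolding ker_pow_def im_pow_def by auto
    moreover have "Suc n + (M - n) = Suc M"
      using M(1) by simp
    ultimately have "(P ^^ Suc M) y = 0"
      by (metis funpow_P_funpow)
    then show "x \<in> W"
      using funpow_kernel_mem[OF assms(1,2) \<open>(P ^^ Suc M) a = 0\<close> a(2) M(1)] y(1) by simp
  qed
  obtain y where y: "(P ^^ n) w = (P ^^ M) y"
    using M(3) by auto
  define p where "p = (P ^^ (M - n)) y"
  have "(P ^^ n) p = (P ^^ n) w"
    using y M(1) by (simp add: p_def funpow_P_funpow)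
  moreover have "(P ^^ Suc n) p = 0"
    using assms(2) calculation by (metis funpow.simps(2) o_apply)
  ultimately show ?thesis
    using that[of "M - n" p] piece M(2) unfolding ker_pow_def im_pow_def p_def by auto
qed

lemma subset_if_pieces_subset:
  assumes T: "subspace T"
    and pieces: "\<And>k l. k \<le> N \<Longrightarrow> l \<le> N \<Longrightarrow> ker_pow P k \<inter> im_pow P l \<subseteq> W \<Longrightarrow>
      ker_pow P k \<inter> im_pow P l \<subseteq> T"
  shows "W \<subseteq> T"
proof -
  have "w \<in> T" if "w \<in> W" "(P ^^ m) w = 0" for m w
    using that
  proof (induct m arbitrary: w)
    case 0
    then show ?case
      using subspace_0[OF T] by simp
  next
    case (Suc n)
    show ?case
    proof (cases "(P ^^ n) w = 0")
      case True
      with Suc show ?thesis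
        by blast
    next
      case False
      obtain l p where l: "l \<le> N" "ker_pow P (Suc n) \<inter> im_pow P l \<subseteq> W"
        and p: "p \<in> ker_pow P (Suc n) \<inter> im_pow P l" "(P ^^ n) p = (P ^^ n) w"
        using exists_piece_through[OF Suc.prems False] by blast
      have "Suc n \<le> N"
        using False funpow_P_eq_0[of n w] by (meson not_less_eq_eq)
      then have "p \<in> T"
        using pieces[OF _ l] p(1) by blast
      moreover have "w - p \<in> T"
        using Suc.hyps subspace_diff[OF W Suc.prems(1)] l(2) p by (auto simp: funpow_P_diff)
      ultimately show ?thesis
        using subspace_add[OF T] by force
    qed
  qed
  then show ?thesis
    using funpow_P_eq_0[of N] by blast
qed

end

lemma theorem7_claim_holds: "theorem7_claim s B P"
  unfolding theorem7_claim_def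
proof (intro allI impI, elim conjE)
  fix W assume W: "subspace W" and invariant: "\<forall>g\<in>Aut_VBP s B P. g ` W \<subseteq> W"
  define pieces where "pieces = {(k, l). k \<le> N \<and> l \<le> N \<and> ker_pow P k \<inter> im_pow P l \<subseteq> W}"
  have "finite pieces"
    unfolding pieces_def by (rule finite_subset[of _ "{..N} \<times> {..N}"]) auto
  then obtain xs where xs: "set xs = pieces"
    using finite_list by blast
  define U where "U i = ker_pow P (fst (xs ! i)) \<inter> im_pow P (snd (xs ! i))" for i
  have U: "subspace (U i)" for i
    unfolding U_def by (intro subspace_inter subspace_ker_pow subspace_im_pow)
  have "subspace_sum (length xs) U \<subseteq> W"
  proof (rule subspace_sum_subset[OF W])
    fix i assume "i < length xs"
    then have "xs ! i \<in> pieces"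
      using xs nth_mem by blast
    then show "U i \<subseteq> W"
      unfolding U_def pieces_def by auto
  qed
  moreover have "W \<subseteq> subspace_sum (length xs) U"
  proof (rule subset_if_pieces_subset[OF W invariant subspace_subspace_sum[OF U]])
    fix k l assume "k \<le> N" "l \<le> N" "ker_pow P k \<inter> im_pow P l \<subseteq> W"
    then have "(k, l) \<in> set xs"
      using xs unfolding pieces_def by simp
    then obtain j where j: "j < length xs" "xs ! j = (k, l)"
      by (auto simp: in_set_conv_nth)
    have "U j \<subseteq> subspace_sum (length xs) U"
      by (rule subset_subspace_sum[OF subspace_0[OF U] j(1)])
    then show "ker_pow P k \<inter> im_pow P l \<subseteq> subspace_sum (length xs) U"
      unfolding U_def j(2) by simp
  qed
  ultimately have "W = subspace_sum (length xs) U"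
    by blast
  then show "\<exists>n k l. W = subspace_sum n (\<lambda>i. ker_pow P (k i) \<inter> im_pow P (l i))"
    unfolding U_def by (intro exI) assumption
qed

end

lemma theorem7_claim_if_nilpotent_self_adjoint:
  fixes s :: "'k::field_char_0 \<Rightarrow> 'v::ab_group_add \<Rightarrow> 'v"
  assumes "fin_dim_vs s" "symplectic_form s B" "Vector_Spaces.linear s s P"
    "nilpotent_op P" "self_adjoint_wrt B P"
  shows "theorem7_claim s B P"
proof -
  obtain N where "P ^^ N = (\<lambda>_. 0)"
    using assms(4) unfolding nilpotent_op_def by blast
  then have "nilpotent_self_adjoint s B P N"
    using assms
    by (simp add: nilpotent_self_adjoint_def nilpotent_self_adjoint_axioms_def symplectic_space_def)
  then interpret nilpotent_self_adjoint s B P N .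
  show ?thesis
    by (rule theorem7_claim_holds)
qed

theorem theorem7:
  shows "(\<forall>(smult_v :: real \<Rightarrow> 'v::ab_group_add \<Rightarrow> 'v) B P.
            fin_dim_vs smult_v \<and> symplectic_form smult_v B \<and> Vector_Spaces.linear smult_v smult_v P \<and>
            nilpotent_op P \<and> self_adjoint_wrt B P \<longrightarrow> theorem7_claim smult_v B P) \<and>
         (\<forall>(smult_v :: complex \<Rightarrow> 'w::ab_group_add \<Rightarrow> 'w) B P.
            fin_dim_vs smult_v \<and> symplectic_form smult_v B \<and> Vector_Spaces.linear smult_v smult_v P \<and>
            nilpotent_op P \<and> self_adjoint_wrt B P \<longrightarrow> theorem7_claim smult_v B P)"
  by (intro conjI allI impI; elim conjE; rule theorem7_claim_if_nilpotent_self_adjoint; assumption)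

end
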